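(* Consider the flat-pricing market described in the context and assume $\eta<\big(\kappa_{\mathrm{avg}}\,\Phi_{\max}^{1-\theta}\big)^{-1}$. Treat $\kappa_{\mathrm{avg}}$ and $\kappa_{\mathrm{peak}}$ as independent variable parameters, with all other parameters fixed. (i) In the opt-saturated case (i.e., when $R'(p_0)<0$), as $\kappa_{\mathrm{peak}}$ decreases, the equilibrium price $p^\star$ decreases, so the net-utility $\Phi^\theta-p^\star$ of every subscriber increases, and the equilibrium revenue $R(p^\star)$ increases (more precisely $\partial p^\star/\partial\kappa_{\mathrm{peak}}>0$ and $\partial R(p^\star)/\partial\kappa_{\mathrm{peak}}<0$); consequently the user surplus and the social welfare increase. (ii) In the opt-unsaturated case (i.e., when $R'(p_0)>0$), as $\kappa_{\mathrm{avg}}$ decreases, the equilibrium price decreases, so the net-utility of every subscriber increases, and the maximal revenue $\max_{p\in\mathcal P}R(p)$ increases; consequently the user surplus and the social welfare increase.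
   Context: Market model (single cell). There are $\hat N$ users (treated as a continuum of mass $\hat N$) in one base-station cell with capacity $C_{3g}>0$ (traffic volume per time slot), and time slots $t\in T=\{1,\dots,|T|\}$. Each user's daily traffic demand $\Phi$ is random with density $f_\Phi(x)=x^{-\sigma}/Z$ for $0\le x\le\Phi_{\max}$, where $0<\sigma<1$ and $Z=\Phi_{\max}^{1-\sigma}/(1-\sigma)$. All users share a temporal preference $w(t)\ge 0$ with $\sum_{t\in T}w(t)=1$; a user with demand $\Phi$ has per-slot demand $\phi(t)=w(t)\Phi$. The willingness to pay is $\gamma(t)=w(t)^{1-\theta}$ with price sensitivity $\theta\in(0,1)$; a user sending volumes $x(t)\le\phi(t)$ and paying $m$ gets net-utility $\sum_{t}\gamma(t)x(t)^\theta-m$. Offloading indicators: constants $\kappa_{\mathrm{avg}},\kappa_{\mathrm{peak}}\in(0,1]$ (independent of price) such that, if $X_{\rm tot}=\sum_t X(t)$ is the total (cellular+WiFi) traffic sent in the cell in a day, then the total daily cellular (3G) traffic is $\kappa_{\mathrm{avg}}X_{\rm tot}$ and the peak per-slot cellular traffic is $\kappa_{\mathrm{peak}}X_{\rm tot}$. Flat pricing with fee $p\ge0$: a user subscribes iff its net-utility $\Phi^\theta-p$ is positive, i.e. iff $\Phi>p^{1/\theta}$, and a subscriber sends its whole demand, $x(t)=\phi(t)$. Let $p_{\max}=\Phi_{\max}^\theta$ (no subscribers for $p\ge p_{\max}$). The provider's revenue (income minus linear cellular cost with coefficient $\eta>0$ per unit of cellular traffic) is, for $0\le p<p_{\max}$,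 $$R(p)=\hat N\int_{p^{1/\theta}}^{\Phi_{\max}}\big(p-\eta\kappa_{\mathrm{avg}}\Phi\big)f_\Phi(\Phi)\,d\Phi,$$ and $R(p)=0$ for $p\ge p_{\max}$. The peak cellular traffic is $A(p)=\kappa_{\mathrm{peak}}\hat N\int_{p^{1/\theta}}^{\Phi_{\max}}\Phi f_\Phi(\Phi)\,d\Phi$. Feasible price set: $\mathcal P=\{p: R(p)>0,\ A(p)\le C_{3g}\}$; threshold price $p_0=\inf\mathcal P$. An equilibrium price is any $p^\star\in\arg\max_{p\in\mathcal P}R(p)$ (it is unique under the stated hypothesis). The network is saturated at $p$ if $A(p)=C_{3g}$; for a unique equilibrium price $p^\star$, the network is called opt-saturated if it is saturated at $p^\star$ and opt-unsaturated otherwise. User surplus is the total net-utility of subscribers; social welfare is user surplus plus provider revenue. *)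

theory Defs
  imports "HOL-Analysis.Analysis"
begin

text \<open>Flat-pricing market in a single cell. Parameters:
  N = mass of users, sig = sigma, M = Phi_max, th = theta, eta = cost coefficient,
  ka = kappa_avg, kp = kappa_peak, C = capacity C_3g.\<close>

definition dens :: "real \<Rightarrow> real \<Rightarrow> real \<Rightarrow> real" where
  "dens sig M x = x powr (- sig) / (M powr (1 - sig) / (1 - sig))"

definition pmax :: "real \<Rightarrow> real \<Rightarrow> real" where
  "pmax th M = M powr th"

definition Rev :: "real \<Rightarrow> real \<Rightarrow> real \<Rightarrow> real \<Rightarrow> real \<Rightarrow> real \<Rightarrow> real \<Rightarrow> real" where
  "Rev N sig M th eta ka p =
     (if p < pmax th M
      then N * integral {p powr (1 / th)..M} (\<lambda>x. (p - eta * ka * x) * dens sig M x)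
      else 0)"

definition Peak :: "real \<Rightarrow> real \<Rightarrow> real \<Rightarrow> real \<Rightarrow> real \<Rightarrow> real \<Rightarrow> real" where
  "Peak N sig M th kp p =
     (if p < pmax th M
      then kp * N * integral {p powr (1 / th)..M} (\<lambda>x. x * dens sig M x)
      else 0)"

definition USurp :: "real \<Rightarrow> real \<Rightarrow> real \<Rightarrow> real \<Rightarrow> real \<Rightarrow> real" where
  "USurp N sig M th p =
     (if p < pmax th M
      then N * integral {p powr (1 / th)..M} (\<lambda>x. (x powr th - p) * dens sig M x)
      else 0)"

definition SWelf :: "real \<Rightarrow> real \<Rightarrow> real \<Rightarrow> real \<Rightarrow> real \<Rightarrow> real \<Rightarrow> real \<Rightarrow> real" where
  "SWelf N sig M th eta ka p = USurp N sig M th p + Rev N sig M th eta ka p"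

definition Feas :: "real \<Rightarrow> real \<Rightarrow> real \<Rightarrow> real \<Rightarrow> real \<Rightarrow> real \<Rightarrow> real \<Rightarrow> real \<Rightarrow> real set" where
  "Feas N sig M th eta C ka kp =
     {p. 0 \<le> p \<and> Rev N sig M th eta ka p > 0 \<and> Peak N sig M th kp p \<le> C}"

definition p0 :: "real \<Rightarrow> real \<Rightarrow> real \<Rightarrow> real \<Rightarrow> real \<Rightarrow> real \<Rightarrow> real \<Rightarrow> real \<Rightarrow> real" where
  "p0 N sig M th eta C ka kp = Inf (Feas N sig M th eta C ka kp)"

definition peq :: "real \<Rightarrow> real \<Rightarrow> real \<Rightarrow> real \<Rightarrow> real \<Rightarrow> real \<Rightarrow> real \<Rightarrow> real \<Rightarrow> real" where
  "peq N sig M th eta C ka kp =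
     (THE p. p \<in> Feas N sig M th eta C ka kp \<and>
        (\<forall>q \<in> Feas N sig M th eta C ka kp. Rev N sig M th eta ka q \<le> Rev N sig M th eta ka p))"

definition MaxRev :: "real \<Rightarrow> real \<Rightarrow> real \<Rightarrow> real \<Rightarrow> real \<Rightarrow> real \<Rightarrow> real \<Rightarrow> real \<Rightarrow> real" where
  "MaxRev N sig M th eta C ka kp =
     Sup (Rev N sig M th eta ka ` Feas N sig M th eta C ka kp)"

end

theory Submission
  imports Defs
begin

(*
  Substituting v = p powr ((1 - sigma) / theta), the revenue R(p) has a closed form whose derivative
  is a positive multiple of the function g(v) = theta M^(1-sigma) - (theta+1-sigma) v
  + eta kappa (1-sigma) v^((2-sigma-theta)/(1-sigma)). As the exponent is at least 1, g is convex;
  it is positive at v = 0 and, by the bound on eta, negative at v = M^(1-sigma). Hence R increases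
  up to a unique peak price and decreases afterwards, and g increases with kappa_avg. The feasible
  set is bounded below by the capacity price, where the peak traffic equals C.

  If R'(p0) < 0, the threshold p0 lies beyond the peak, so p0 is the capacity price; for kappa_peak
  near its value the equilibrium price is the capacity price, a differentiable increasing function
  of kappa_peak, and the chain rule gives the signs of both derivatives. If R'(p0) > 0, the
  equilibrium price is the revenue peak; lowering kappa_avg moves the peak to the left and raises
  the revenue at every price. In both cases the user surplus decreases with the price.
*)

lemma has_integral_powr_interval:
  fixes u M e :: real
  assumes "0 \<le> u" "u \<le> M" "e > 0"
  shows "((\<lambda>x. x powr (e - 1)) has_integral (M powr e - u powr e) / e) {u..M}"
proof -
  have "((\<lambda>x. x powr (e - 1)) has_integral (\<lambda>x. x powr e / e) M - (\<lambda>x. x powr e / e) u) {u..M}"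
  proof (rule fundamental_theorem_of_calculus_interior)
    show "continuous_on {u..M} (\<lambda>x. x powr e / e)"
      using assms by (intro continuous_intros continuous_on_powr') auto
    fix x assume "x \<in> {u<..<M}"
    then have "x > 0" using assms by auto
    then show "((\<lambda>x. x powr e / e) has_vector_derivative x powr (e - 1)) (at x)"
      using assms(3) unfolding has_real_derivative_iff_has_vector_derivative[symmetric]
      by (auto intro!: derivative_eq_intros)
  qed (use assms in auto)
  then show ?thesis by (simp add: diff_divide_distrib)
qed

lemma continuous_on_powr_nonneg:
  fixes e :: real
  assumes "e > 0"
  shows "continuous_on {0..} (\<lambda>x::real. x powr e)"
  using assms by (intro continuous_on_powr' continuous_on_id continuous_on_const) auto

lemma convex_on_neg_between:
  fixes f :: "real \<Rightarrow> real"
  assumes "convex_on S f" "v1 \<in> S" "v2 \<in> S" "v1 < v" "v < v2"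
    and "f v1 \<le> 0" "f v2 < 0"
  shows "f v < 0"
proof -
  define t where "t = (v - v1) / (v2 - v1)"
  have t: "0 < t" "t < 1" using assms(4,5) by (auto simp: t_def field_simps)
  have "t * (v2 - v1) = v - v1" using assms(4,5) by (simp add: t_def)
  then have v: "v = (1 - t) *\<^sub>R v1 + t *\<^sub>R v2" by (simp add: algebra_simps)
  have "f v \<le> (1 - t) * f v1 + t * f v2"
    unfolding v using convex_onD[OF assms(1)] t assms(2,3) by simp
  also have "\<dots> < 0"
    using t assms(6,7) by (smt (verit) mult_nonneg_nonpos mult_pos_neg)
  finally show ?thesis .
qed

lemma powr_less_powr_iff:
  fixes x y a :: real
  assumes "a > 0" "x \<ge> 0" "y \<ge> 0"
  shows "x powr a < y powr a \<longleftrightarrow> x < y"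
  using assms by (metis powr_less_mono2 powr_mono2 less_imp_le not_less)

lemma powr_le_powr_iff:
  fixes x y a :: real
  assumes "a > 0" "x \<ge> 0" "y \<ge> 0"
  shows "x powr a \<le> y powr a \<longleftrightarrow> x \<le> y"
  using powr_less_powr_iff[OF assms(1,3,2)] by linarith

lemma powr_inverse_le_iff:
  fixes b q e :: real
  assumes "b \<ge> 0" "q \<ge> 0" "e > 0"
  shows "b \<le> q powr e \<longleftrightarrow> b powr (1 / e) \<le> q"
  using powr_le_powr_iff[of e "b powr (1 / e)" q] assms by (simp add: powr_powr)

(* 0 powr 0 = 0 in Isabelle, which is harmless here because dens vanishes at 0. *)
lemma powr_zero_mult_dens: "x powr 0 * dens sig M x = dens sig M x"
  by (cases "x = 0") (simp_all add: dens_def)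

lemma the_strict_argmax_eq:
  fixes f :: "'a \<Rightarrow> 'b::linorder"
  assumes "x \<in> F" "\<And>r. r \<in> F \<Longrightarrow> r \<noteq> x \<Longrightarrow> f r < f x"
  shows "(THE p. p \<in> F \<and> (\<forall>q\<in>F. f q \<le> f p)) = x"
proof (rule the_equality)
  show "x \<in> F \<and> (\<forall>q\<in>F. f q \<le> f x)" using assms by (metis order.order_iff_strict)
  show "p = x" if "p \<in> F \<and> (\<forall>q\<in>F. f q \<le> f p)" for p
    using that assms by (metis not_less)
qed

lemma cSup_image_strict_argmax:
  fixes f :: "'a \<Rightarrow> 'b::conditionally_complete_linorder"
  assumes "x \<in> F" "\<And>r. r \<in> F \<Longrightarrow> r \<noteq> x \<Longrightarrow> f r < f x"
  shows "Sup (f ` F) = f x"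
  using assms by (intro cSup_eq_maximum) (auto intro: order.strict_implies_order)

lemma isCont_eventually_gt:
  fixes f :: "real \<Rightarrow> real"
  assumes "isCont f x" "c < f x"
  shows "\<forall>\<^sub>F y in nhds x. c < f y"
  using assms unfolding isCont_def by (simp add: order_tendstoD(1) tendsto_nhds_iff)

lemma isCont_eventually_less:
  fixes f :: "real \<Rightarrow> real"
  assumes "isCont f x" "f x < c"
  shows "\<forall>\<^sub>F y in nhds x. f y < c"
  using assms unfolding isCont_def by (simp add: order_tendstoD(2) tendsto_nhds_iff)

locale flat_market =
  fixes N sig M th eta C :: real
  assumes N_pos: "N > 0" and sig: "0 < sig" "sig < 1" and th: "0 < th" "th < 1"
    and M_pos: "M > 0" and eta_pos: "eta > 0" and C_pos: "C > 0"
begin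

subsection \<open>Closed forms and monotonicity in the price\<close>

definition rev_formula :: "real \<Rightarrow> real \<Rightarrow> real" where
  "rev_formula k p = N * (p * (M powr (1-sig) - p powr ((1-sig)/th))
     - eta*k*(1-sig)/(2-sig) * (M powr (2-sig) - p powr ((2-sig)/th))) / M powr (1-sig)"

definition peak_formula :: "real \<Rightarrow> real \<Rightarrow> real" where
  "peak_formula k p = k * N * (1-sig)/(2-sig) * (M powr (2-sig) - p powr ((2-sig)/th)) / M powr (1-sig)"

definition surplus_formula :: "real \<Rightarrow> real" where
  "surplus_formula p = N * ((1-sig)/(th+1-sig) * (M powr (th+1-sig) - p powr ((th+1-sig)/th))
     - p * (M powr (1-sig) - p powr ((1-sig)/th))) / M powr (1-sig)"

lemma threshold_powr_less:
  assumes "0 \<le> p" "p < pmax th M" "e > 0"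
  shows "p powr (e / th) < M powr e"
proof -
  have "p powr (e / th) < (M powr th) powr (e / th)"
    using assms th by (intro powr_less_mono2) (auto simp: pmax_def)
  then show ?thesis using th by (simp add: powr_powr)
qed

lemma has_integral_dens_moment:
  assumes p: "0 \<le> p" "p < pmax th M" and a: "a \<ge> 0"
  shows "((\<lambda>x. x powr a * dens sig M x) has_integral
     (1-sig)/(a+1-sig) * (M powr (a+1-sig) - p powr ((a+1-sig)/th)) / M powr (1-sig)) {p powr (1/th)..M}"
proof -
  have "p powr (1/th) < M"
    using threshold_powr_less[OF p, of 1] M_pos by simp
  then have "((\<lambda>x. (1-sig) / M powr (1-sig) * x powr (a+1-sig - 1)) has_integral
      (1-sig) / M powr (1-sig) * ((M powr (a+1-sig) - (p powr (1/th)) powr (a+1-sig)) / (a+1-sig)))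
      {p powr (1/th)..M}"
    using a sig by (intro has_integral_mult_right has_integral_powr_interval) auto
  moreover have "x powr (a+1-sig - 1) = x powr a * x powr (-sig)" for x :: real
    by (simp add: powr_add[symmetric])
  ultimately show ?thesis
    using sig M_pos by (simp add: dens_def powr_powr field_simps)
qed

lemma Rev_eq_rev_formula:
  assumes "0 \<le> p" "p < pmax th M"
  shows "Rev N sig M th eta k p = rev_formula k p"
proof -
  let ?S = "{p powr (1/th)..M}"
  have "((\<lambda>x. p * (x powr 0 * dens sig M x) - eta*k * (x powr 1 * dens sig M x)) has_integral
      p * ((1-sig)/(0+1-sig) * (M powr (0+1-sig) - p powr ((0+1-sig)/th)) / M powr (1-sig))
      - eta*k * ((1-sig)/(1+1-sig) * (M powr (1+1-sig) - p powr ((1+1-sig)/th)) / M powr (1-sig))) ?S"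
    using assms by (intro has_integral_diff has_integral_mult_right has_integral_dens_moment) auto
  moreover have "p * (x powr 0 * dens sig M x) - eta*k * (x powr 1 * dens sig M x)
      = (p - eta*k*x) * dens sig M x" if "x \<in> ?S" for x
  proof -
    have "x \<ge> 0" using that by (meson atLeastAtMost_iff order.trans powr_ge_zero)
    then show ?thesis using powr_zero_mult_dens[of x] by (simp add: algebra_simps)
  qed
  ultimately have "((\<lambda>x. (p - eta*k*x) * dens sig M x) has_integral
      p * ((1-sig)/(0+1-sig) * (M powr (0+1-sig) - p powr ((0+1-sig)/th)) / M powr (1-sig))
      - eta*k * ((1-sig)/(1+1-sig) * (M powr (1+1-sig) - p powr ((1+1-sig)/th)) / M powr (1-sig))) ?S"
    by (rule has_integral_eq[rotated])
  moreover have "M powr (1-sig) > 0" "2 - sig > 0" using M_pos sig by auto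
  ultimately show ?thesis
    using assms by (simp add: Rev_def rev_formula_def integral_unique field_simps)
qed

lemma Peak_eq_peak_formula:
  assumes "0 \<le> p" "p < pmax th M"
  shows "Peak N sig M th k p = peak_formula k p"
proof -
  let ?S = "{p powr (1/th)..M}"
  have "((\<lambda>x. x powr 1 * dens sig M x) has_integral
      (1-sig)/(1+1-sig) * (M powr (1+1-sig) - p powr ((1+1-sig)/th)) / M powr (1-sig)) ?S"
    using assms by (intro has_integral_dens_moment) auto
  moreover have "x powr 1 * dens sig M x = x * dens sig M x" if "x \<in> ?S" for x
  proof -
    have "x \<ge> 0" using that by (meson atLeastAtMost_iff order.trans powr_ge_zero)
    then show ?thesis by simp
  qed
  ultimately have "((\<lambda>x. x * dens sig M x) has_integral
      (1-sig)/(1+1-sig) * (M powr (1+1-sig) - p powr ((1+1-sig)/th)) / M powr (1-sig)) ?S"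
    by (rule has_integral_eq[rotated])
  moreover have "M powr (1-sig) > 0" "2 - sig > 0" using M_pos sig by auto
  ultimately show ?thesis
    using assms by (simp add: Peak_def peak_formula_def integral_unique field_simps)
qed

lemma USurp_eq_surplus_formula:
  assumes "0 \<le> p" "p < pmax th M"
  shows "USurp N sig M th p = surplus_formula p"
proof -
  let ?S = "{p powr (1/th)..M}"
  have "((\<lambda>x. x powr th * dens sig M x - p * (x powr 0 * dens sig M x)) has_integral
      (1-sig)/(th+1-sig) * (M powr (th+1-sig) - p powr ((th+1-sig)/th)) / M powr (1-sig)
      - p * ((1-sig)/(0+1-sig) * (M powr (0+1-sig) - p powr ((0+1-sig)/th)) / M powr (1-sig))) ?S"
    using assms th by (intro has_integral_diff has_integral_mult_right has_integral_dens_moment) auto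
  moreover have "x powr th * dens sig M x - p * (x powr 0 * dens sig M x)
      = (x powr th - p) * dens sig M x" for x
    using powr_zero_mult_dens[of x] by (simp add: algebra_simps)
  ultimately have "((\<lambda>x. (x powr th - p) * dens sig M x) has_integral
      (1-sig)/(th+1-sig) * (M powr (th+1-sig) - p powr ((th+1-sig)/th)) / M powr (1-sig)
      - p * ((1-sig)/(0+1-sig) * (M powr (0+1-sig) - p powr ((0+1-sig)/th)) / M powr (1-sig))) ?S"
    by (rule has_integral_eq[rotated])
  then show ?thesis
    using assms sig by (simp add: USurp_def surplus_formula_def integral_unique diff_divide_distrib right_diff_distrib)
qed

definition marginal :: "real \<Rightarrow> real \<Rightarrow> real" where
  "marginal k v = th * M powr (1-sig) - (th + 1 - sig) * v + eta*k*(1-sig) * v powr ((2-sig-th)/(1-sig))"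

lemma rev_formula_has_derivative:
  assumes p: "p > 0"
  shows "(rev_formula k has_real_derivative
          N / (th * M powr (1-sig)) * marginal k (p powr ((1-sig)/th))) (at p)"
proof -
  define a b r where "a = (1-sig)/th" and "b = (2-sig)/th" and "r = (2-sig-th)/(1-sig)"
  have "(rev_formula k has_real_derivative
      N * ((1 * (M powr (1-sig) - p powr a) + (0 - a * p powr (a - 1)) * p)
        - eta*k*(1-sig)/(2-sig) * (0 - b * p powr (b - 1))) / M powr (1-sig)) (at p)"
    unfolding rev_formula_def[abs_def] a_def[symmetric] b_def[symmetric]
    by (intro DERIV_cdivide DERIV_cmult DERIV_diff DERIV_mult DERIV_ident DERIV_const
        has_real_derivative_powr p)
  moreover have "N * ((1 * (M powr (1-sig) - p powr a) + (0 - a * p powr (a - 1)) * p)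
        - eta*k*(1-sig)/(2-sig) * (0 - b * p powr (b - 1))) / M powr (1-sig)
      = N / (th * M powr (1-sig)) * marginal k (p powr a)"
  proof -
    have da: "(0 - a * p powr (a - 1)) * p = - a * p powr a"
      using p by (simp add: powr_diff)
    have vr: "(p powr a) powr r = p powr (b - 1)"
    proof -
      have "a * r = b - 1" using sig th by (simp add: a_def b_def r_def field_simps)
      then show ?thesis by (simp add: powr_powr)
    qed
    have collect: "N * ((1 * (M powr (1-sig) - v) + - a * v)
        - eta*k*(1-sig)/(2-sig) * (0 - b * w)) / M powr (1-sig)
      = N / (th * M powr (1-sig)) * (th * M powr (1-sig) - (th+1-sig) * v + eta*k*(1-sig) * w)"
      for v w :: real
      using M_pos sig th by (simp add: a_def b_def field_simps)
    show ?thesis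
      unfolding marginal_def r_def[symmetric] by (simp only: da vr collect)
  qed
  ultimately show ?thesis by (simp add: a_def)
qed

lemma continuous_on_rev_formula: "continuous_on {0..} (rev_formula k)"
  using sig th M_pos unfolding rev_formula_def
  by (intro continuous_on_add continuous_on_diff continuous_on_mult continuous_on_divide
      continuous_on_const continuous_on_id continuous_on_powr_nonneg) auto

lemma rev_formula_zero_neg: "k > 0 \<Longrightarrow> rev_formula k 0 < 0"
  using sig th M_pos N_pos eta_pos by (simp add: rev_formula_def)

lemma peak_formula_antimono:
  assumes "k \<ge> 0" "0 \<le> a" "a \<le> b"
  shows "peak_formula k b \<le> peak_formula k a"
proof -
  have "a powr ((2-sig)/th) \<le> b powr ((2-sig)/th)"
    using assms sig th by (intro powr_mono2) auto
  then show ?thesis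
    unfolding peak_formula_def using assms N_pos sig M_pos
    by (intro divide_right_mono mult_left_mono) auto
qed

lemma rev_formula_strict_anti_cost:
  assumes "0 \<le> p" "p < pmax th M" "k < k'"
  shows "rev_formula k' p < rev_formula k p"
proof -
  have "M powr (2-sig) - p powr ((2-sig)/th) > 0"
    using threshold_powr_less[OF assms(1,2), of "2-sig"] sig by simp
  then have "eta*k*(1-sig)/(2-sig) * (M powr (2-sig) - p powr ((2-sig)/th))
      < eta*k'*(1-sig)/(2-sig) * (M powr (2-sig) - p powr ((2-sig)/th))"
    using assms sig eta_pos
    by (intro mult_strict_right_mono divide_strict_right_mono mult_strict_left_mono) auto
  then show ?thesis
    unfolding rev_formula_def using N_pos M_pos
    by (intro divide_strict_right_mono mult_strict_left_mono) auto
qed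

lemma continuous_on_surplus_formula: "continuous_on {0..} surplus_formula"
  using sig th M_pos unfolding surplus_formula_def
  by (intro continuous_on_add continuous_on_diff continuous_on_mult continuous_on_divide
      continuous_on_const continuous_on_id continuous_on_powr_nonneg) auto

lemma surplus_formula_strict_anti:
  assumes "0 \<le> a" "a < b" "b < pmax th M"
  shows "surplus_formula b < surplus_formula a"
proof (rule DERIV_neg_imp_decreasing_open[OF assms(2)])
  show "continuous_on {a..b} surplus_formula"
    using continuous_on_surplus_formula by (rule continuous_on_subset) (use assms in auto)
  fix x assume x: "a < x" "x < b"
  then have "x > 0" using assms by simp
  define v where "v = x powr ((1-sig)/th)"
  have "(surplus_formula has_real_derivative
     N * ((1-sig)/(th+1-sig) * (0 - ((th+1-sig)/th) * x powr ((th+1-sig)/th - 1))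
      - (1 * (M powr (1-sig) - v) + (0 - ((1-sig)/th) * x powr ((1-sig)/th - 1)) * x))
      / M powr (1-sig)) (at x)"
    unfolding surplus_formula_def[abs_def] v_def
    by (intro DERIV_cdivide DERIV_cmult DERIV_diff DERIV_mult DERIV_ident DERIV_const
        has_real_derivative_powr \<open>x > 0\<close>)
  moreover have "x powr ((th+1-sig)/th - 1) = v"
    using th by (simp add: v_def field_simps)
  moreover have "(0 - ((1-sig)/th) * x powr ((1-sig)/th - 1)) * x = - ((1-sig)/th) * v"
  proof -
    have "x powr (a - 1) * x = x powr a" for a
      using \<open>x > 0\<close> by (simp add: powr_diff)
    then show ?thesis unfolding v_def by (simp add: algebra_simps)
  qed
  moreover have "(1-sig)/(th+1-sig) * (0 - ((th+1-sig)/th) * v) = - ((1-sig)/th) * v"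
    using sig th by simp
  moreover have "N * (- ((1-sig)/th) * v - (1 * (M powr (1-sig) - v) + - ((1-sig)/th) * v))
      = - N * (M powr (1-sig) - v)"
    by (simp add: algebra_simps)
  ultimately have "(surplus_formula has_real_derivative - N * (M powr (1-sig) - v) / M powr (1-sig)) (at x)"
    by (simp only:)
  moreover have "v < M powr (1-sig)"
    unfolding v_def using threshold_powr_less[of x "1-sig"] x assms sig by simp
  ultimately show "\<exists>y. (surplus_formula has_real_derivative y) (at x) \<and> y < 0"
    using N_pos M_pos by (intro exI conjI) (auto simp: divide_neg_pos mult_pos_neg)
qed

subsection \<open>Unimodality of the revenue\<close>

definition cost_admissible :: "real \<Rightarrow> bool" where
  "cost_admissible k \<longleftrightarrow> 0 < k \<and> eta < 1 / (k * M powr (1 - th))"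

lemma cost_admissible_mono:
  assumes "cost_admissible k'" "0 < k" "k \<le> k'"
  shows "cost_admissible k"
proof -
  have "1 / (k' * M powr (1 - th)) \<le> 1 / (k * M powr (1 - th))"
    using assms M_pos by (intro divide_left_mono mult_right_mono mult_pos_pos) (auto simp: cost_admissible_def)
  then show ?thesis using assms by (auto simp: cost_admissible_def)
qed

abbreviation marginal_price :: "real \<Rightarrow> real \<Rightarrow> real" where
  "marginal_price k p \<equiv> marginal k (p powr ((1-sig)/th))"

lemma marginal_zero_pos: "marginal k 0 > 0"
  using th M_pos by (simp add: marginal_def)

lemma marginal_top_neg:
  assumes "cost_admissible k"
  shows "marginal k (M powr (1-sig)) < 0"
proof -
  have "(M powr (1-sig)) powr ((2-sig-th)/(1-sig)) = M powr (1-sig) * M powr (1-th)"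
  proof -
    have "(1-sig) * ((2-sig-th)/(1-sig)) = (1-sig) + (1-th)" using sig by (simp add: field_simps)
    then show ?thesis by (simp add: powr_powr powr_add[symmetric])
  qed
  then have "marginal k (M powr (1-sig)) = (1-sig) * M powr (1-sig) * (eta * k * M powr (1-th) - 1)"
    unfolding marginal_def by (simp add: algebra_simps)
  moreover have "eta * (k * M powr (1-th)) < 1"
  proof -
    have "k * M powr (1-th) > 0" using assms M_pos by (simp add: cost_admissible_def)
    then show ?thesis using assms by (simp add: cost_admissible_def pos_less_divide_eq)
  qed
  ultimately show ?thesis using sig M_pos by (simp add: mult_pos_neg)
qed

lemma convex_on_marginal:
  assumes "k \<ge> 0"
  shows "convex_on {0<..} (marginal k)"
proof -
  have "(2-sig-th)/(1-sig) \<ge> 1" using sig th by (simp add: field_simps)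
  then have "convex_on {0<..} (\<lambda>v. eta*k*(1-sig) * v powr ((2-sig-th)/(1-sig)))"
    using assms eta_pos sig by (intro convex_on_cmul powr_convex) auto
  moreover have "convex_on {0<..} (\<lambda>v::real. th * M powr (1-sig) - (th + 1 - sig) * v)"
    using sig th by (intro convex_on_diff concave_on_cmul) (auto simp: convex_on_const concave_on_ident)
  ultimately show ?thesis
    unfolding marginal_def by (intro convex_on_add)
qed

lemma continuous_on_marginal: "continuous_on {0..} (marginal k)"
proof -
  have "(2-sig-th)/(1-sig) > 0" using sig th by simp
  then show ?thesis
    unfolding marginal_def
    by (intro continuous_on_add continuous_on_diff continuous_on_mult continuous_on_const
        continuous_on_id continuous_on_powr_nonneg)
qed

lemma marginal_strict_mono_cost:
  assumes "k < k'" "v > 0"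
  shows "marginal k v < marginal k' v"
proof -
  have "k * (eta * (1-sig) * v powr ((2-sig-th)/(1-sig)))
      < k' * (eta * (1-sig) * v powr ((2-sig-th)/(1-sig)))"
    using assms eta_pos sig by (intro mult_strict_right_mono) auto
  then show ?thesis unfolding marginal_def by (simp add: algebra_simps)
qed

lemma marginal_neg_right:
  assumes "cost_admissible k" "0 < v1" "v1 < v" "v < M powr (1-sig)" "marginal k v1 \<le> 0"
  shows "marginal k v < 0"
  using convex_on_neg_between[OF convex_on_marginal _ _ assms(3,4,5) marginal_top_neg[OF assms(1)]]
    assms(1,2) M_pos by (auto simp: cost_admissible_def)

definition revenue_peak :: "real \<Rightarrow> real \<Rightarrow> bool" where
  "revenue_peak k ps \<longleftrightarrow> 0 < ps \<and> ps < pmax th M \<and> marginal_price k ps = 0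
     \<and> (\<forall>p. 0 \<le> p \<and> p < ps \<longrightarrow> marginal_price k p > 0)
     \<and> (\<forall>p. ps < p \<and> p < pmax th M \<longrightarrow> marginal_price k p < 0)"

lemma revenue_peak_exists:
  assumes k: "cost_admissible k"
  shows "\<exists>ps. revenue_peak k ps"
proof -
  let ?v = "\<lambda>p. p powr ((1-sig)/th)"
  have e: "(1-sig)/th > 0" using sig th by simp
  obtain vs where vs: "0 \<le> vs" "vs \<le> M powr (1-sig)" "marginal k vs = 0"
    using IVT2'[OF less_imp_le[OF marginal_top_neg[OF k]] less_imp_le[OF marginal_zero_pos]
      _ continuous_on_subset[OF continuous_on_marginal]] M_pos by auto
  have vs_pos: "vs > 0" using vs marginal_zero_pos[of k] by (cases "vs = 0") auto
  have vs_top: "vs < M powr (1-sig)" using vs marginal_top_neg[OF k] by (cases "vs = M powr (1-sig)") auto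
  define ps where "ps = vs powr (th/(1-sig))"
  have v_ps: "?v ps = vs" using vs sig th by (simp add: ps_def powr_powr)
  have "0 < ps" using vs_pos by (simp add: ps_def)
  moreover have "ps < pmax th M"
  proof -
    have "ps < (M powr (1-sig)) powr (th/(1-sig))"
      unfolding ps_def using vs_pos vs_top sig th by (intro powr_less_mono2) auto
    then show ?thesis using sig by (simp add: pmax_def powr_powr)
  qed
  moreover have "marginal_price k p > 0" if "0 \<le> p" "p < ps" for p
  proof (rule ccontr)
    assume "\<not> ?thesis"
    moreover have "?v p < vs" using that \<open>0 < ps\<close> e by (simp add: powr_less_powr_iff flip: v_ps)
    ultimately have "marginal k vs < 0"
      using marginal_neg_right[OF k, of "?v p" vs] marginal_zero_pos[of k] vs_top
      by (cases "p = 0") auto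
    then show False using vs by simp
  qed
  moreover have "marginal_price k p < 0" if "ps < p" "p < pmax th M" for p
  proof -
    have "vs < ?v p" using that \<open>0 < ps\<close> e by (simp add: powr_less_powr_iff flip: v_ps)
    moreover have "?v p < M powr (1-sig)" using that \<open>0 < ps\<close> sig threshold_powr_less[of p "1-sig"] by simp
    ultimately show ?thesis using marginal_neg_right[OF k vs_pos] vs by simp
  qed
  ultimately show ?thesis using vs v_ps unfolding revenue_peak_def by (intro exI[of _ ps]) auto
qed

lemma revenue_peak_gt:
  assumes "revenue_peak k ps" "0 \<le> q" "q < pmax th M" "marginal_price k q > 0"
  shows "q < ps"
proof (rule ccontr)
  assume "\<not> q < ps"
  then consider "q = ps" | "ps < q" by linarith
  then show False using assms unfolding revenue_peak_def by cases auto
qed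

lemma revenue_peak_lt:
  assumes "revenue_peak k ps" "0 \<le> q" "marginal_price k q < 0"
  shows "ps < q"
proof (rule ccontr)
  assume "\<not> ps < q"
  then consider "q = ps" | "q < ps" by linarith
  then show False using assms unfolding revenue_peak_def by cases force+
qed

lemma rev_formula_strict_mono_below_peak:
  assumes "revenue_peak k ps" "0 \<le> a" "a < b" "b \<le> ps"
  shows "rev_formula k a < rev_formula k b"
proof (rule DERIV_pos_imp_increasing_open[OF assms(3)])
  show "continuous_on {a..b} (rev_formula k)"
    using continuous_on_rev_formula by (rule continuous_on_subset) (use assms in auto)
  fix x assume "a < x" "x < b"
  then have "x > 0" "marginal_price k x > 0" using assms unfolding revenue_peak_def by auto
  moreover have "N / (th * M powr (1-sig)) > 0" using N_pos th M_pos by simp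
  ultimately show "\<exists>y. (rev_formula k has_real_derivative y) (at x) \<and> y > 0"
    using rev_formula_has_derivative by (blast intro: mult_pos_pos)
qed

lemma rev_formula_strict_anti_above_peak:
  assumes "revenue_peak k ps" "ps \<le> a" "a < b" "b < pmax th M"
  shows "rev_formula k b < rev_formula k a"
proof (rule DERIV_neg_imp_decreasing_open[OF assms(3)])
  show "continuous_on {a..b} (rev_formula k)"
    using continuous_on_rev_formula by (rule continuous_on_subset) (use assms in \<open>auto simp: revenue_peak_def\<close>)
  fix x assume "a < x" "x < b"
  then have "x > 0" "marginal_price k x < 0" using assms unfolding revenue_peak_def by auto
  moreover have "N / (th * M powr (1-sig)) > 0" using N_pos th M_pos by simp
  ultimately show "\<exists>y. (rev_formula k has_real_derivative y) (at x) \<and> y < 0"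
    using rev_formula_has_derivative by (blast intro: mult_pos_neg)
qed

subsection \<open>Feasible prices and the equilibrium price\<close>

abbreviation feasible :: "real \<Rightarrow> real \<Rightarrow> real set" where
  "feasible ka kp \<equiv> Feas N sig M th eta C ka kp"

abbreviation threshold_price :: "real \<Rightarrow> real \<Rightarrow> real" where
  "threshold_price ka kp \<equiv> p0 N sig M th eta C ka kp"

abbreviation eq_price :: "real \<Rightarrow> real \<Rightarrow> real" where
  "eq_price ka kp \<equiv> peq N sig M th eta C ka kp"

lemma mem_feasible_iff:
  "q \<in> feasible ka kp \<longleftrightarrow>
     0 \<le> q \<and> q < pmax th M \<and> rev_formula ka q > 0 \<and> peak_formula kp q \<le> C"
proof -
  have "Rev N sig M th eta ka q > 0 \<Longrightarrow> q < pmax th M"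
    unfolding Rev_def by (cases "q < pmax th M") auto
  then show ?thesis
    unfolding Feas_def using Rev_eq_rev_formula Peak_eq_peak_formula by auto
qed

lemma bdd_below_feasible: "bdd_below (feasible ka kp)"
  unfolding bdd_below_def using mem_feasible_iff by blast

lemma threshold_price_bounds:
  assumes "ka > 0" "feasible ka kp \<noteq> {}"
  shows "0 < threshold_price ka kp" "threshold_price ka kp < pmax th M"
proof -
  let ?F = "feasible ka kp"
  obtain q where q: "q \<in> ?F" using assms by blast
  have "threshold_price ka kp \<le> q" unfolding p0_def using cInf_lower[OF q bdd_below_feasible] .
  then show "threshold_price ka kp < pmax th M" using q mem_feasible_iff by force
  have "(rev_formula ka \<longlongrightarrow> rev_formula ka 0) (at 0 within {0..})"
    using continuous_on_rev_formula by (simp add: continuous_on_def)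
  then have "\<forall>\<^sub>F x in at 0 within {0..}. rev_formula ka x < 0"
    using rev_formula_zero_neg[OF assms(1)] by (rule order_tendstoD)
  then obtain d where d: "d > 0" "\<And>x. 0 \<le> x \<Longrightarrow> x < d \<Longrightarrow> rev_formula ka x < 0"
    using rev_formula_zero_neg[OF assms(1)] unfolding eventually_at by (metis atLeast_iff dist_real_def diff_zero abs_of_nonneg)
  show "0 < threshold_price ka kp"
  proof (rule ccontr)
    assume "\<not> ?thesis"
    then have "Inf ?F < d" using d unfolding p0_def by simp
    then obtain x where "x \<in> ?F" "x < d" using cInf_less_iff[OF _ bdd_below_feasible] assms by blast
    then show False using d mem_feasible_iff by force
  qed
qed

lemma Rev_has_derivative_eq:
  assumes "0 < p" "p < pmax th M" "(Rev N sig M th eta k has_real_derivative d) (at p)"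
  shows "d = N / (th * M powr (1-sig)) * marginal_price k p"
proof -
  have "\<forall>\<^sub>F x in nhds p. Rev N sig M th eta k x = rev_formula k x"
    unfolding eventually_nhds
    by (rule exI[of _ "{0<..<pmax th M}"]) (use assms Rev_eq_rev_formula in auto)
  then have "(Rev N sig M th eta k has_real_derivative N / (th * M powr (1-sig)) * marginal_price k p) (at p)"
    using DERIV_cong_ev[OF refl _ refl] rev_formula_has_derivative assms(1) by blast
  then show ?thesis using assms(3) DERIV_unique by blast
qed

lemma Rev_has_derivative_sign:
  assumes "0 < p" "p < pmax th M" "(Rev N sig M th eta k has_real_derivative d) (at p)"
  shows "d < 0 \<longleftrightarrow> marginal_price k p < 0" "d > 0 \<longleftrightarrow> marginal_price k p > 0"
proof -
  define c where "c = N / (th * M powr (1-sig))"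
  have "c > 0" using N_pos th M_pos by (simp add: c_def)
  moreover have "d = c * marginal_price k p" using Rev_has_derivative_eq[OF assms] by (simp add: c_def)
  ultimately show "d < 0 \<longleftrightarrow> marginal_price k p < 0" "d > 0 \<longleftrightarrow> marginal_price k p > 0"
    by (simp_all add: mult_less_0_iff zero_less_mult_iff)
qed

lemma eq_price_eq_strict_argmax:
  assumes "x \<in> feasible ka kp" "\<And>r. r \<in> feasible ka kp \<Longrightarrow> r \<noteq> x \<Longrightarrow> rev_formula ka r < rev_formula ka x"
  shows "eq_price ka kp = x" "MaxRev N sig M th eta C ka kp = rev_formula ka x"
proof -
  have Rev_eq: "Rev N sig M th eta ka r = rev_formula ka r" if "r \<in> feasible ka kp" for r
    using that mem_feasible_iff Rev_eq_rev_formula by auto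
  show "eq_price ka kp = x"
    unfolding peq_def using assms by (intro the_strict_argmax_eq) (auto simp: Rev_eq)
  have "MaxRev N sig M th eta C ka kp = Rev N sig M th eta ka x"
    unfolding MaxRev_def using assms by (intro cSup_image_strict_argmax) (auto simp: Rev_eq)
  then show "MaxRev N sig M th eta C ka kp = rev_formula ka x" using Rev_eq assms(1) by simp
qed

subsection \<open>The opt-unsaturated case\<close>

lemma revenue_peak_strict_mono_cost:
  assumes "revenue_peak k psk" "revenue_peak k' ps" "k < k'"
  shows "psk < ps"
proof -
  have "marginal_price k ps < marginal_price k' ps"
    using assms by (intro marginal_strict_mono_cost) (auto simp: revenue_peak_def)
  then have "marginal_price k ps < 0" using assms(2) by (simp add: revenue_peak_def)
  then show ?thesis using assms(2) by (intro revenue_peak_lt[OF assms(1)]) (auto simp: revenue_peak_def)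
qed

lemma eq_price_eq_revenue_peak:
  assumes "revenue_peak k ps" "q \<in> feasible k kp" "q < ps" "kp > 0"
  shows "eq_price k kp = ps" "MaxRev N sig M th eta C k kp = rev_formula k ps"
proof -
  have q: "0 \<le> q" "rev_formula k q > 0" "peak_formula kp q \<le> C"
    using assms(2) mem_feasible_iff by auto
  have "rev_formula k q < rev_formula k ps"
    using rev_formula_strict_mono_below_peak[OF assms(1) q(1) assms(3)] by simp
  moreover have "peak_formula kp ps \<le> peak_formula kp q"
    using peak_formula_antimono assms(3,4) q(1) by simp
  ultimately have ps: "ps \<in> feasible k kp"
    using assms(1) q mem_feasible_iff by (force simp: revenue_peak_def)
  have "rev_formula k r < rev_formula k ps" if "r \<in> feasible k kp" "r \<noteq> ps" for r
  proof (cases "r < ps")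
    case True then show ?thesis using that mem_feasible_iff rev_formula_strict_mono_below_peak[OF assms(1)] by auto
  next
    case False then show ?thesis using that mem_feasible_iff rev_formula_strict_anti_above_peak[OF assms(1)] by auto
  qed
  then show "eq_price k kp = ps" "MaxRev N sig M th eta C k kp = rev_formula k ps"
    using eq_price_eq_strict_argmax[OF ps] by auto
qed

lemma opt_unsaturated_lower_cost:
  assumes ka: "cost_admissible ka" and ps: "revenue_peak ka ps" and kp: "kp > 0"
    and q: "q \<in> feasible ka kp" "q < ps"
    and k: "0 < k" "k < ka" and slope_k: "marginal_price k q > 0"
  shows "eq_price k kp < ps \<and> MaxRev N sig M th eta C k kp > rev_formula ka ps \<and>
      USurp N sig M th (eq_price k kp) > surplus_formula ps \<and>
      Rev N sig M th eta k (eq_price k kp) > rev_formula ka ps"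
proof -
  have q_bounds: "0 \<le> q" "q < pmax th M" "rev_formula ka q > 0" "peak_formula kp q \<le> C"
    using q(1) mem_feasible_iff by auto
  obtain psk where psk: "revenue_peak k psk"
    using revenue_peak_exists cost_admissible_mono[OF ka k(1)] k(2) by force
  have "q < psk" using revenue_peak_gt[OF psk q_bounds(1,2) slope_k] .
  moreover have "q \<in> feasible k kp"
    using rev_formula_strict_anti_cost[OF q_bounds(1,2) k(2)] q_bounds mem_feasible_iff by auto
  ultimately have eq_k: "eq_price k kp = psk" "MaxRev N sig M th eta C k kp = rev_formula k psk"
    using eq_price_eq_revenue_peak[OF psk _ _ kp] by auto
  have psk_ps: "psk < ps" using revenue_peak_strict_mono_cost[OF psk ps k(2)] .
  have bounds: "0 < psk" "ps < pmax th M" using psk ps by (auto simp: revenue_peak_def)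
  have "rev_formula ka ps < rev_formula k ps"
    using bounds psk_ps k(2) by (intro rev_formula_strict_anti_cost) auto
  also have "\<dots> < rev_formula k psk"
    using rev_formula_strict_anti_above_peak[OF psk order_refl psk_ps bounds(2)] .
  finally have "rev_formula ka ps < rev_formula k psk" .
  moreover have "surplus_formula ps < surplus_formula psk"
    using surplus_formula_strict_anti bounds psk_ps by simp
  ultimately show ?thesis
    using eq_k psk_ps bounds by (simp add: USurp_eq_surplus_formula Rev_eq_rev_formula)
qed

lemma opt_unsaturated_eventually:
  assumes ka: "cost_admissible ka" and kp: "kp > 0" and ne: "feasible ka kp \<noteq> {}"
    and slope: "marginal_price ka (threshold_price ka kp) > 0"
  shows "\<forall>\<^sub>F k in at_left ka. eq_price k kp < eq_price ka kp \<and>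
      MaxRev N sig M th eta C k kp > MaxRev N sig M th eta C ka kp \<and>
      USurp N sig M th (eq_price k kp) > USurp N sig M th (eq_price ka kp) \<and>
      Rev N sig M th eta k (eq_price k kp) > Rev N sig M th eta ka (eq_price ka kp)"
proof -
  have ka_pos: "ka > 0" using ka by (simp add: cost_admissible_def)
  obtain ps where ps: "revenue_peak ka ps" using revenue_peak_exists[OF ka] by blast
  have "threshold_price ka kp < ps"
    using revenue_peak_gt[OF ps] threshold_price_bounds[OF ka_pos ne] slope by simp
  then obtain q where q: "q \<in> feasible ka kp" "q < ps"
    using cInf_less_iff[OF ne bdd_below_feasible] unfolding p0_def by blast
  have eq_ka: "eq_price ka kp = ps" "MaxRev N sig M th eta C ka kp = rev_formula ka ps"
    using eq_price_eq_revenue_peak[OF ps q kp] by auto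
  have ps_bounds: "0 \<le> ps" "ps < pmax th M" using ps by (auto simp: revenue_peak_def)
  have "0 \<le> q" "marginal_price ka q > 0" using ps q mem_feasible_iff by (auto simp: revenue_peak_def)
  moreover have "((\<lambda>k. marginal_price k q) \<longlongrightarrow> marginal_price ka q) (at_left ka)"
    unfolding marginal_def by (intro tendsto_intros)
  ultimately have "\<forall>\<^sub>F k in at_left ka. marginal_price k q > 0"
    by (simp add: order_tendstoD(1))
  moreover have "\<forall>\<^sub>F k in at_left ka. k \<in> {0<..<ka}" by (rule eventually_at_left_real[OF ka_pos])
  ultimately show ?thesis
    by eventually_elim
      (use opt_unsaturated_lower_cost[OF ka ps kp q] eq_ka ps_bounds in
        \<open>auto simp: USurp_eq_surplus_formula Rev_eq_rev_formula\<close>)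
qed

lemma opt_unsaturated_comparative_statics:
  assumes ka: "cost_admissible ka" and kp: "kp > 0" and ne: "feasible ka kp \<noteq> {}"
    and dd: "(Rev N sig M th eta ka has_real_derivative d) (at (threshold_price ka kp))" "d > 0"
  shows "(\<forall>\<^sub>F k in at_left ka. eq_price k kp < eq_price ka kp) \<and>
      (\<forall>x. 0 \<le> x \<and> x \<le> M \<and> x powr th - eq_price ka kp > 0 \<longrightarrow>
           (\<forall>\<^sub>F k in at_left ka. x powr th - eq_price k kp > x powr th - eq_price ka kp)) \<and>
      (\<forall>\<^sub>F k in at_left ka. MaxRev N sig M th eta C k kp > MaxRev N sig M th eta C ka kp) \<and>
      (\<forall>\<^sub>F k in at_left ka. USurp N sig M th (eq_price k kp) > USurp N sig M th (eq_price ka kp)) \<and>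
      (\<forall>\<^sub>F k in at_left ka. SWelf N sig M th eta k (eq_price k kp)
                              > SWelf N sig M th eta ka (eq_price ka kp))"
proof -
  have "marginal_price ka (threshold_price ka kp) > 0"
    using threshold_price_bounds[OF _ ne] ka Rev_has_derivative_sign(2)[OF _ _ dd(1)] dd(2)
    by (simp add: cost_admissible_def)
  note ev = opt_unsaturated_eventually[OF ka kp ne this]
  have "\<forall>\<^sub>F k in at_left ka. eq_price k kp < eq_price ka kp"
    using ev by eventually_elim simp
  moreover have "\<forall>\<^sub>F k in at_left ka. MaxRev N sig M th eta C k kp > MaxRev N sig M th eta C ka kp"
    using ev by eventually_elim simp
  moreover have "\<forall>\<^sub>F k in at_left ka. USurp N sig M th (eq_price k kp) > USurp N sig M th (eq_price ka kp)"
    using ev by eventually_elim simp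
  moreover have "\<forall>\<^sub>F k in at_left ka. SWelf N sig M th eta k (eq_price k kp)
                              > SWelf N sig M th eta ka (eq_price ka kp)"
    using ev by eventually_elim (simp add: SWelf_def)
  ultimately show ?thesis by (auto elim: eventually_mono)
qed

subsection \<open>The opt-saturated case\<close>

definition capacity_level :: "real \<Rightarrow> real" where
  "capacity_level k = M powr (2-sig) - C * (2-sig) * M powr (1-sig) / ((1-sig) * N) / k"

(* The least price meeting the capacity constraint; max 0 covers capacities that never bind. *)
definition capacity_price :: "real \<Rightarrow> real" where
  "capacity_price k = max 0 (capacity_level k) powr (th/(2-sig))"

lemma peak_formula_le_iff:
  assumes "k > 0" "q \<ge> 0"
  shows "peak_formula k q \<le> C \<longleftrightarrow> capacity_price k \<le> q"
proof -
  define l where "l = k * N * (1-sig) / ((2-sig) * M powr (1-sig))"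
  have l: "l > 0" unfolding l_def using assms N_pos sig M_pos by simp
  have "peak_formula k q = l * (M powr (2-sig) - q powr ((2-sig)/th))"
    unfolding peak_formula_def l_def by simp
  moreover have "capacity_level k = M powr (2-sig) - C / l"
    unfolding capacity_level_def l_def using assms N_pos sig M_pos by (simp add: field_simps)
  moreover have "l * (M powr (2-sig) - q powr ((2-sig)/th)) \<le> C
      \<longleftrightarrow> M powr (2-sig) - q powr ((2-sig)/th) \<le> C / l"
    using l by (simp add: pos_le_divide_eq mult.commute)
  ultimately have "peak_formula k q \<le> C \<longleftrightarrow> capacity_level k \<le> q powr ((2-sig)/th)"
    by auto
  also have "\<dots> \<longleftrightarrow> max 0 (capacity_level k) \<le> q powr ((2-sig)/th)"
    by simp
  also have "\<dots> \<longleftrightarrow> capacity_price k \<le> q"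
    unfolding capacity_price_def using powr_inverse_le_iff[of "max 0 (capacity_level k)" q "(2-sig)/th"]
      assms sig th by simp
  finally show ?thesis .
qed

lemma capacity_level_has_derivative:
  assumes "k > 0"
  shows "(capacity_level has_real_derivative C * (2-sig) * M powr (1-sig) / ((1-sig) * N) / k^2) (at k)"
  unfolding capacity_level_def[abs_def] using assms N_pos sig
  by (auto intro!: derivative_eq_intros simp: power2_eq_square mult_ac)

lemma capacity_level_strict_mono:
  assumes "0 < k" "k < k'"
  shows "capacity_level k < capacity_level k'"
proof -
  have "C * (2-sig) * M powr (1-sig) / ((1-sig) * N) > 0" using C_pos sig M_pos N_pos by simp
  then have "C * (2-sig) * M powr (1-sig) / ((1-sig) * N) / k' < C * (2-sig) * M powr (1-sig) / ((1-sig) * N) / k"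
    using assms by (intro divide_strict_left_mono) auto
  then show ?thesis unfolding capacity_level_def by simp
qed

lemma capacity_price_strict_mono:
  assumes "0 < k" "k < k'" "capacity_level k > 0"
  shows "capacity_price k < capacity_price k'"
  unfolding capacity_price_def using capacity_level_strict_mono[OF assms(1,2)] assms(3) sig th
  by (intro powr_less_mono2) auto

lemma capacity_price_has_pos_derivative:
  assumes "k > 0" "capacity_level k > 0"
  shows "\<exists>D > 0. (capacity_price has_real_derivative D) (at k)"
proof -
  let ?L = "C * (2-sig) * M powr (1-sig) / ((1-sig) * N) / k^2"
  have "\<forall>\<^sub>F x in nhds k. capacity_level x > 0"
    using DERIV_isCont[OF capacity_level_has_derivative[OF assms(1)]] assms(2)
    by (rule isCont_eventually_gt)
  then have ev: "\<forall>\<^sub>F x in nhds k. capacity_level x powr (th/(2-sig)) = capacity_price x"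
    by eventually_elim (simp add: capacity_price_def)
  have "((\<lambda>x. capacity_level x powr (th/(2-sig))) has_real_derivative
      th/(2-sig) * capacity_level k powr (th/(2-sig) - of_nat 1) * ?L) (at k)"
    by (rule DERIV_fun_powr[OF capacity_level_has_derivative[OF assms(1)] assms(2)])
  then have "(capacity_price has_real_derivative
      th/(2-sig) * capacity_level k powr (th/(2-sig) - of_nat 1) * ?L) (at k)"
    using DERIV_cong_ev[OF refl ev refl] by blast
  moreover have "th/(2-sig) * capacity_level k powr (th/(2-sig) - of_nat 1) * ?L > 0"
    using assms sig th C_pos M_pos N_pos by simp
  ultimately show ?thesis by blast
qed

lemma rev_formula_threshold_price_pos:
  assumes ka: "cost_admissible ka" and ne: "feasible ka kp \<noteq> {}"
    and slope: "marginal_price ka (threshold_price ka kp) < 0"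
  shows "rev_formula ka (threshold_price ka kp) > 0"
proof -
  let ?p0 = "threshold_price ka kp"
  have p0: "0 < ?p0" using threshold_price_bounds ne ka by (auto simp: cost_admissible_def)
  obtain ps where ps: "revenue_peak ka ps" using revenue_peak_exists[OF ka] by blast
  have ps_p0: "ps < ?p0" using revenue_peak_lt[OF ps] p0 slope by simp
  obtain q where q: "q \<in> feasible ka kp" using ne by blast
  have "?p0 \<le> q" unfolding p0_def using q by (rule cInf_lower[OF _ bdd_below_feasible])
  then show ?thesis
    using q mem_feasible_iff rev_formula_strict_anti_above_peak[OF ps less_imp_le[OF ps_p0], of q]
    by (cases "q = ?p0") auto
qed

lemma threshold_price_eq_capacity_price:
  assumes ka: "cost_admissible ka" and kp: "kp > 0" and ne: "feasible ka kp \<noteq> {}"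
    and slope: "marginal_price ka (threshold_price ka kp) < 0"
  shows "capacity_price kp = threshold_price ka kp" "capacity_level kp > 0"
proof -
  let ?p0 = "threshold_price ka kp"
  have p0: "0 < ?p0" "?p0 < pmax th M"
    using threshold_price_bounds ne ka by (auto simp: cost_admissible_def)
  obtain ps where ps: "revenue_peak ka ps" using revenue_peak_exists[OF ka] by blast
  have ps_p0: "ps < ?p0" using revenue_peak_lt[OF ps] p0 slope by simp
  have "capacity_price kp \<le> q" if "q \<in> feasible ka kp" for q
    using that mem_feasible_iff peak_formula_le_iff[OF kp] by auto
  then have cap_p0: "capacity_price kp \<le> ?p0" unfolding p0_def using ne by (intro cInf_greatest) auto
  have rev_p0: "rev_formula ka ?p0 > 0"
    using rev_formula_threshold_price_pos[OF ka ne slope] .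
  show cap: "capacity_price kp = ?p0"
  proof (rule ccontr)
    assume "capacity_price kp \<noteq> ?p0"
    then have lt: "max ps (capacity_price kp) < ?p0" using cap_p0 ps_p0 by simp
    define q where "q = (max ps (capacity_price kp) + ?p0) / 2"
    have q: "max ps (capacity_price kp) < q" "q < ?p0" using lt by (simp_all add: q_def)
    have "0 \<le> q" using q(1) ps by (simp add: revenue_peak_def)
    moreover have "rev_formula ka ?p0 < rev_formula ka q"
      using q p0 by (intro rev_formula_strict_anti_above_peak[OF ps]) auto
    ultimately have "q \<in> feasible ka kp"
      using q p0 rev_p0 mem_feasible_iff peak_formula_le_iff[OF kp] by auto
    then have "?p0 \<le> q" unfolding p0_def by (rule cInf_lower[OF _ bdd_below_feasible])
    then show False using q by simp
  qed
  show "capacity_level kp > 0"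
  proof (rule ccontr)
    assume "\<not> capacity_level kp > 0"
    then have "capacity_price kp = 0" by (simp add: capacity_price_def)
    then show False using cap p0 by simp
  qed
qed

lemma eq_price_eq_capacity_price:
  assumes ka: "cost_admissible ka" and k: "k > 0" and lt: "capacity_price k < pmax th M"
    and slope: "marginal_price ka (capacity_price k) < 0" and rev: "rev_formula ka (capacity_price k) > 0"
  shows "eq_price ka k = capacity_price k"
proof (rule eq_price_eq_strict_argmax)
  have nonneg: "capacity_price k \<ge> 0" by (simp add: capacity_price_def)
  then show cap: "capacity_price k \<in> feasible ka k"
    using lt rev mem_feasible_iff peak_formula_le_iff[OF k] by auto
  obtain ps where ps: "revenue_peak ka ps" using revenue_peak_exists[OF ka] by blast
  have ps_cap: "ps < capacity_price k" using revenue_peak_lt[OF ps nonneg slope] .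
  fix r assume r: "r \<in> feasible ka k" "r \<noteq> capacity_price k"
  then have "capacity_price k < r" "r < pmax th M"
    using mem_feasible_iff peak_formula_le_iff[OF k] by force+
  then show "rev_formula ka r < rev_formula ka (capacity_price k)"
    using rev_formula_strict_anti_above_peak[OF ps less_imp_le[OF ps_cap]] by blast
qed

lemma eventually_eq_price_eq_capacity_price:
  assumes ka: "cost_admissible ka" and kp: "kp > 0" and ne: "feasible ka kp \<noteq> {}"
    and slope: "marginal_price ka (threshold_price ka kp) < 0"
  shows "\<forall>\<^sub>F k in nhds kp. eq_price ka k = capacity_price k \<and> 0 < k \<and> capacity_level k > 0
      \<and> capacity_price k < pmax th M \<and> marginal_price ka (capacity_price k) < 0"
proof -
  let ?p0 = "threshold_price ka kp"
  note cap = threshold_price_eq_capacity_price[OF assms]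
  have p0: "0 < ?p0" "?p0 < pmax th M"
    using threshold_price_bounds ne ka by (auto simp: cost_admissible_def)
  have cont: "isCont capacity_price kp"
    using capacity_price_has_pos_derivative[OF kp cap(2)] DERIV_isCont by blast
  have "isCont (\<lambda>k. marginal_price ka (capacity_price k)) kp"
    unfolding marginal_def using cont cap(1) p0 by (intro continuous_intros) auto
  then have "\<forall>\<^sub>F k in nhds kp. marginal_price ka (capacity_price k) < 0"
    using cap(1) slope by (intro isCont_eventually_less) auto
  moreover have "isCont (\<lambda>k. rev_formula ka (capacity_price k)) kp"
    unfolding rev_formula_def using cont cap(1) p0 M_pos by (intro continuous_intros) auto
  then have "\<forall>\<^sub>F k in nhds kp. rev_formula ka (capacity_price k) > 0"
    using cap(1) rev_formula_threshold_price_pos[OF ka ne slope] by (intro isCont_eventually_gt) auto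
  moreover have "\<forall>\<^sub>F k in nhds kp. capacity_price k < pmax th M"
    using cont cap(1) p0 by (intro isCont_eventually_less) auto
  moreover have "\<forall>\<^sub>F k in nhds kp. capacity_level k > 0"
    using DERIV_isCont[OF capacity_level_has_derivative[OF kp]] cap(2) by (rule isCont_eventually_gt)
  moreover have "\<forall>\<^sub>F k in nhds kp. k > 0"
    using kp by (intro isCont_eventually_gt) auto
  ultimately show ?thesis
    by eventually_elim (use eq_price_eq_capacity_price[OF ka] in auto)
qed

lemma opt_saturated_derivatives:
  assumes ka: "cost_admissible ka" and kp: "kp > 0" and ne: "feasible ka kp \<noteq> {}"
    and dd: "(Rev N sig M th eta ka has_real_derivative d) (at (threshold_price ka kp))" "d < 0"
  shows "\<exists>D > 0. (eq_price ka has_real_derivative D) (at kp)"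
    "\<exists>D < 0. ((\<lambda>k. Rev N sig M th eta ka (eq_price ka k)) has_real_derivative D) (at kp)"
proof -
  have p0: "0 < threshold_price ka kp" "threshold_price ka kp < pmax th M"
    using threshold_price_bounds ne ka by (auto simp: cost_admissible_def)
  then have slope: "marginal_price ka (threshold_price ka kp) < 0"
    using Rev_has_derivative_sign(1)[OF _ _ dd(1)] dd(2) by simp
  note cap = threshold_price_eq_capacity_price[OF ka kp ne slope]
  have ev: "\<forall>\<^sub>F k in nhds kp. capacity_price k = eq_price ka k"
    using eventually_eq_price_eq_capacity_price[OF ka kp ne slope] by eventually_elim simp
  obtain D where D: "D > 0" "(capacity_price has_real_derivative D) (at kp)"
    using capacity_price_has_pos_derivative[OF kp cap(2)] by blast
  then have deq: "(eq_price ka has_real_derivative D) (at kp)"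
    using DERIV_cong_ev[OF refl ev refl] by blast
  then show "\<exists>D > 0. (eq_price ka has_real_derivative D) (at kp)" using D(1) by blast
  have "eq_price ka kp = threshold_price ka kp"
    using eventually_nhds_x_imp_x[OF ev] cap(1) by simp
  then have "((\<lambda>k. Rev N sig M th eta ka (eq_price ka k)) has_real_derivative d * D) (at kp)"
    using DERIV_chain2[OF _ deq] dd(1) by simp
  then show "\<exists>D < 0. ((\<lambda>k. Rev N sig M th eta ka (eq_price ka k)) has_real_derivative D) (at kp)"
    using dd(2) D(1) mult_neg_pos by blast
qed

lemma opt_saturated_eventually:
  assumes ka: "cost_admissible ka" and kp: "kp > 0" and ne: "feasible ka kp \<noteq> {}"
    and slope: "marginal_price ka (threshold_price ka kp) < 0"
  shows "\<forall>\<^sub>F k in at_left kp. eq_price ka k < eq_price ka kp \<and>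
      USurp N sig M th (eq_price ka k) > USurp N sig M th (eq_price ka kp) \<and>
      Rev N sig M th eta ka (eq_price ka k) > Rev N sig M th eta ka (eq_price ka kp)"
proof -
  let ?p0 = "threshold_price ka kp"
  have p0: "0 < ?p0" "?p0 < pmax th M"
    using threshold_price_bounds ne ka by (auto simp: cost_admissible_def)
  note cap = threshold_price_eq_capacity_price[OF assms]
  note ev = eventually_eq_price_eq_capacity_price[OF assms]
  have eq_kp: "eq_price ka kp = ?p0" using eventually_nhds_x_imp_x[OF ev] cap(1) by simp
  obtain ps where ps: "revenue_peak ka ps" using revenue_peak_exists[OF ka] by blast
  have "at_left kp \<le> nhds kp" by (simp add: at_within_def)
  then have "\<forall>\<^sub>F k in at_left kp. eq_price ka k = capacity_price k \<and> 0 < k \<and> capacity_level k > 0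
      \<and> marginal_price ka (capacity_price k) < 0"
    using ev by (rule filter_leD[OF _ eventually_mono]) auto
  moreover have "\<forall>\<^sub>F k in at_left kp. k < kp"
    using eventually_at_left_real[OF kp] by eventually_elim simp
  ultimately show ?thesis
  proof eventually_elim
    case (elim k)
    then have eq_k: "eq_price ka k = capacity_price k" and k: "0 < k" "k < kp"
      and level: "capacity_level k > 0" and slope_k: "marginal_price ka (capacity_price k) < 0" by auto
    have cap_nonneg: "capacity_price k \<ge> 0" by (simp add: capacity_price_def)
    have lt: "capacity_price k < ?p0" using capacity_price_strict_mono[OF k level] cap(1) by simp
    have "ps < capacity_price k" using revenue_peak_lt[OF ps cap_nonneg slope_k] .
    then have "rev_formula ka ?p0 < rev_formula ka (capacity_price k)"
      using rev_formula_strict_anti_above_peak[OF ps _ lt p0(2)] by simp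
    moreover have "surplus_formula ?p0 < surplus_formula (capacity_price k)"
      using surplus_formula_strict_anti[OF cap_nonneg lt p0(2)] .
    ultimately show ?case
      using eq_k eq_kp lt cap_nonneg p0
      by (simp add: USurp_eq_surplus_formula Rev_eq_rev_formula)
  qed
qed

lemma opt_saturated_comparative_statics:
  assumes ka: "cost_admissible ka" and kp: "kp > 0" and ne: "feasible ka kp \<noteq> {}"
    and dd: "(Rev N sig M th eta ka has_real_derivative d) (at (threshold_price ka kp))" "d < 0"
  shows "(\<exists>D > 0. ((\<lambda>k. eq_price ka k) has_real_derivative D) (at kp within {0<..1})) \<and>
      (\<exists>D < 0. ((\<lambda>k. Rev N sig M th eta ka (eq_price ka k)) has_real_derivative D)
                  (at kp within {0<..1})) \<and>
      (\<forall>x. 0 \<le> x \<and> x \<le> M \<and> x powr th - eq_price ka kp > 0 \<longrightarrow>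
           (\<forall>\<^sub>F k in at_left kp. x powr th - eq_price ka k > x powr th - eq_price ka kp)) \<and>
      (\<forall>\<^sub>F k in at_left kp. USurp N sig M th (eq_price ka k) > USurp N sig M th (eq_price ka kp)) \<and>
      (\<forall>\<^sub>F k in at_left kp. SWelf N sig M th eta ka (eq_price ka k)
                              > SWelf N sig M th eta ka (eq_price ka kp))"
proof -
  have "marginal_price ka (threshold_price ka kp) < 0"
    using threshold_price_bounds[OF _ ne] ka Rev_has_derivative_sign(1)[OF _ _ dd(1)] dd(2)
    by (simp add: cost_admissible_def)
  note ev = opt_saturated_eventually[OF ka kp ne this]
  obtain D D' where "D > 0" "(eq_price ka has_real_derivative D) (at kp)" and
    "D' < 0" "((\<lambda>k. Rev N sig M th eta ka (eq_price ka k)) has_real_derivative D') (at kp)"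
    using opt_saturated_derivatives[OF ka kp ne dd] by blast
  then have "\<exists>D > 0. ((\<lambda>k. eq_price ka k) has_real_derivative D) (at kp within {0<..1})"
    "\<exists>D < 0. ((\<lambda>k. Rev N sig M th eta ka (eq_price ka k)) has_real_derivative D) (at kp within {0<..1})"
    using has_field_derivative_at_within by blast+
  moreover have "\<forall>\<^sub>F k in at_left kp. eq_price ka k < eq_price ka kp"
    using ev by eventually_elim simp
  moreover have "\<forall>\<^sub>F k in at_left kp. USurp N sig M th (eq_price ka k) > USurp N sig M th (eq_price ka kp)"
    using ev by eventually_elim simp
  moreover have "\<forall>\<^sub>F k in at_left kp. SWelf N sig M th eta ka (eq_price ka k)
                              > SWelf N sig M th eta ka (eq_price ka kp)"
    using ev by eventually_elim (simp add: SWelf_def)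
  ultimately show ?thesis by (auto elim: eventually_mono)
qed

end

theorem theorem1:
  fixes N C sig M th eta ka kp :: real
  assumes hN: "N > 0" and hC: "C > 0"
    and hsig: "0 < sig" "sig < 1"
    and hth: "0 < th" "th < 1"
    and hM: "M > 0" and heta: "eta > 0"
    and hka: "0 < ka" "ka \<le> 1"
    and hkp: "0 < kp" "kp \<le> 1"
    and heta_bound: "eta < 1 / (ka * M powr (1 - th))"
    and hfeas: "Feas N sig M th eta C ka kp \<noteq> {}"
  shows
    "((\<exists>d. (Rev N sig M th eta ka has_real_derivative d) (at (p0 N sig M th eta C ka kp)) \<and> d < 0) \<longrightarrow>
        (\<exists>D > 0. ((\<lambda>k. peq N sig M th eta C ka k) has_real_derivative D) (at kp within {0<..1})) \<and>
        (\<exists>D < 0. ((\<lambda>k. Rev N sig M th eta ka (peq N sig M th eta C ka k)) has_real_derivative D)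
                    (at kp within {0<..1})) \<and>
        (\<forall>x. 0 \<le> x \<and> x \<le> M \<and> x powr th - peq N sig M th eta C ka kp > 0 \<longrightarrow>
             (\<forall>\<^sub>F k in at_left kp. x powr th - peq N sig M th eta C ka k
                                     > x powr th - peq N sig M th eta C ka kp)) \<and>
        (\<forall>\<^sub>F k in at_left kp. USurp N sig M th (peq N sig M th eta C ka k)
                                > USurp N sig M th (peq N sig M th eta C ka kp)) \<and>
        (\<forall>\<^sub>F k in at_left kp. SWelf N sig M th eta ka (peq N sig M th eta C ka k)
                                > SWelf N sig M th eta ka (peq N sig M th eta C ka kp)))
     \<and>
     ((\<exists>d. (Rev N sig M th eta ka has_real_derivative d) (at (p0 N sig M th eta C ka kp)) \<and> d > 0) \<longrightarrow>
        (\<forall>\<^sub>F k in at_left ka. peq N sig M th eta C k kp < peq N sig M th eta C ka kp) \<and>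
        (\<forall>x. 0 \<le> x \<and> x \<le> M \<and> x powr th - peq N sig M th eta C ka kp > 0 \<longrightarrow>
             (\<forall>\<^sub>F k in at_left ka. x powr th - peq N sig M th eta C k kp
                                     > x powr th - peq N sig M th eta C ka kp)) \<and>
        (\<forall>\<^sub>F k in at_left ka. MaxRev N sig M th eta C k kp > MaxRev N sig M th eta C ka kp) \<and>
        (\<forall>\<^sub>F k in at_left ka. USurp N sig M th (peq N sig M th eta C k kp)
                                > USurp N sig M th (peq N sig M th eta C ka kp)) \<and>
        (\<forall>\<^sub>F k in at_left ka. SWelf N sig M th eta k (peq N sig M th eta C k kp)
                                > SWelf N sig M th eta ka (peq N sig M th eta C ka kp)))"
proof -
  interpret flat_market N sig M th eta C
    using hN hC hsig hth hM heta by unfold_locales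
  have ka: "cost_admissible ka"
    using hka(1) heta_bound by (simp add: cost_admissible_def)
  show ?thesis
    using opt_saturated_comparative_statics[OF ka hkp(1) hfeas]
      opt_unsaturated_comparative_statics[OF ka hkp(1) hfeas] by blast
qed

end
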